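(* Let $\Gamma$ be a group and let $\mathcal{S}=\mathcal{S}(\Pi,A,\xi)$ be a Gr-category of the type $(\Pi,A)$. (i) If $(\theta,F)$ is a factor set on $\Gamma$ with coefficients in $\mathcal{S}$, then there are group homomorphisms $\varphi:\Gamma\to\mathrm{Aut}\,\Pi$ and $f:\Gamma\to\mathrm{Aut}\,A$ such that, for every $\sigma\in\Gamma$, $F^\sigma(x)=\varphi(\sigma)(x)$ and $F^\sigma(x,a)=(\varphi(\sigma)(x),f(\sigma)(a))$ for all $x\in\Pi$, $a\in A$; and, setting $\sigma x=\varphi(\sigma)(x)$, $\sigma a=f(\sigma)(a)$, the $\Pi$-module $A$ becomes a $\Pi$-module $\Gamma$-equivariant, i.e. $\sigma(xa)=(\sigma x)(\sigma a)$ for all $\sigma\in\Gamma,x\in\Pi,a\in A$. (ii) If $(F^\sigma)_{\sigma\in\Gamma}$ is a family of monoidal autoequivalences of $\mathcal{S}$ and $(\theta^{\sigma,\tau}:F^\sigma F^\tau\to F^{\sigma\tau})_{\sigma,\tau\in\Gamma}$ is a family of isomorphisms of monoidal functors satisfying conditions (ii) and (iii) in the definition of a factor set, then condition (i) holds automatically, i.e. $F^1=\mathrm{id}_{\mathcal{S}}$ as a monoidal functor.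
   Context: Let $\Pi$ be a group and $A$ a left $\Pi$-module. A Gr-category of the type $(\Pi,A)$, $\mathcal{S}(\Pi,A,\xi)$, has as objects the elements of $\Pi$, only automorphisms as morphisms, $\mathrm{Aut}(x)=\{x\}\times A$, composition $(x,u)\circ(x,v)=(x,u+v)$, tensor product $x\otimes y=xy$, $(x,u)\otimes(y,v)=(xy,u+xv)$, associativity constraint $a_{x,y,z}=(xyz,\xi(x,y,z))$ for a normalized 3-cocycle $\xi\in Z^3(\Pi,A)$ (group cohomology), and strict unit constraints (unit object $1$). A monoidal functor is written $F=(F,\widetilde F,\widehat F)$ with $\widetilde F_{x,y}:F(x\otimes y)\to F(x)\otimes F(y)$ and $\widehat F:F(1)\to 1$. A factor set on $\Gamma$ with coefficients in a monoidal category $\mathcal{C}$ is a pair $(\theta,F)$: monoidal autoequivalences $F^\sigma:\mathcal{C}\to\mathcal{C}$ ($\sigma\in\Gamma$) and isomorphisms of monoidal functors $\theta^{\sigma,\tau}:F^\sigma F^\tau\to F^{\sigma\tau}$, such that (i) $F^1=\mathrm{id}_{\mathcal{C}}$; (ii) $\theta^{1,\sigma}=\mathrm{id}_{F^\sigma}=\theta^{\sigma,1}$; (iii) $\theta^{\sigma\tau,\gamma}\circ(\theta^{\sigma,\tau}F^\gamma)=\theta^{\sigma,\tau\gamma}\circ(F^\sigma\theta^{\tau,\gamma})$ for all $\sigma,\tau,\gamma\in\Gamma$. *)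

theory Defs
  imports "HOL-Algebra.Algebra" "HOL-Algebra.Bij"
begin

text \<open>The group Pi is a HOL-Algebra group P; the Pi-module A is a HOL-Algebra
commutative group (written multiplicatively: the paper's u + v is u \<otimes> v, 0 is \<one>);
the action of x on u is act x u.\<close>

definition pi_module ::
  "('p, 'm) monoid_scheme \<Rightarrow> ('a, 'n) monoid_scheme \<Rightarrow> ('p \<Rightarrow> 'a \<Rightarrow> 'a) \<Rightarrow> bool" where
  "pi_module P A act \<longleftrightarrow> group P \<and> comm_group A \<and>
     (\<forall>x\<in>carrier P. act x \<in> hom A A) \<and>
     (\<forall>u\<in>carrier A. act \<one>\<^bsub>P\<^esub> u = u) \<and>
     (\<forall>x\<in>carrier P. \<forall>y\<in>carrier P. \<forall>u\<in>carrier A.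
        act (x \<otimes>\<^bsub>P\<^esub> y) u = act x (act y u))"

definition normalized_3cocycle ::
  "('p, 'm) monoid_scheme \<Rightarrow> ('a, 'n) monoid_scheme \<Rightarrow> ('p \<Rightarrow> 'a \<Rightarrow> 'a)
   \<Rightarrow> ('p \<Rightarrow> 'p \<Rightarrow> 'p \<Rightarrow> 'a) \<Rightarrow> bool" where
  "normalized_3cocycle P A act \<xi> \<longleftrightarrow>
     (\<forall>x\<in>carrier P. \<forall>y\<in>carrier P. \<forall>z\<in>carrier P. \<xi> x y z \<in> carrier A) \<and>
     (\<forall>x\<in>carrier P. \<forall>y\<in>carrier P. \<forall>z\<in>carrier P. \<forall>t\<in>carrier P.
        act x (\<xi> y z t) \<otimes>\<^bsub>A\<^esub> \<xi> x (y \<otimes>\<^bsub>P\<^esub> z) t \<otimes>\<^bsub>A\<^esub> \<xi> x y z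
        = \<xi> (x \<otimes>\<^bsub>P\<^esub> y) z t \<otimes>\<^bsub>A\<^esub> \<xi> x y (z \<otimes>\<^bsub>P\<^esub> t)) \<and>
     (\<forall>x\<in>carrier P. \<forall>y\<in>carrier P.
        \<xi> \<one>\<^bsub>P\<^esub> x y = \<one>\<^bsub>A\<^esub> \<and> \<xi> x \<one>\<^bsub>P\<^esub> y = \<one>\<^bsub>A\<^esub> \<and> \<xi> x y \<one>\<^bsub>P\<^esub> = \<one>\<^bsub>A\<^esub>)"

definition Gr_category_type ::
  "('p, 'm) monoid_scheme \<Rightarrow> ('a, 'n) monoid_scheme \<Rightarrow> ('p \<Rightarrow> 'a \<Rightarrow> 'a)
   \<Rightarrow> ('p \<Rightarrow> 'p \<Rightarrow> 'p \<Rightarrow> 'a) \<Rightarrow> bool" where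
  "Gr_category_type P A act \<xi> \<longleftrightarrow> pi_module P A act \<and> normalized_3cocycle P A act \<xi>"

text \<open>Objects go to fobj x; the morphism (x,u)
  goes to (fobj x, fmor x u); ftil x y is the element of A such that
  F~_{x,y} = (F(xy), ftil x y) : F(xy) -> F(x)F(y) (forcing F(xy) = F(x)F(y), as S has only
  automorphisms); fhat is the element with F^ = (1, fhat) : F(1) -> 1 (forcing F(1) = 1).\<close>
record ('p, 'a) mfun =
  fobj :: "'p \<Rightarrow> 'p"
  fmor :: "'p \<Rightarrow> 'a \<Rightarrow> 'a"
  ftil :: "'p \<Rightarrow> 'p \<Rightarrow> 'a"
  fhat :: "'a"

text \<open>Composition in S: (x,u) o (x,v) = (x, u \<otimes> v);  tensor (x,u) (y,v) = (xy, u \<otimes> act x v);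
  associativity constraint a_{x,y,z} = (xyz, xi x y z) : x(yz) -> (xy)z; strict units.\<close>
definition monoidal_functor ::
  "('p, 'm) monoid_scheme \<Rightarrow> ('a, 'n) monoid_scheme \<Rightarrow> ('p \<Rightarrow> 'a \<Rightarrow> 'a)
   \<Rightarrow> ('p \<Rightarrow> 'p \<Rightarrow> 'p \<Rightarrow> 'a) \<Rightarrow> ('p, 'a) mfun \<Rightarrow> bool" where
  "monoidal_functor P A act \<xi> F \<longleftrightarrow>
     \<comment> \<open>functor\<close>
     (\<forall>x\<in>carrier P. fobj F x \<in> carrier P) \<and>
     (\<forall>x\<in>carrier P. \<forall>u\<in>carrier A. fmor F x u \<in> carrier A) \<and>
     (\<forall>x\<in>carrier P. fmor F x \<one>\<^bsub>A\<^esub> = \<one>\<^bsub>A\<^esub>) \<and>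
     (\<forall>x\<in>carrier P. \<forall>u\<in>carrier A. \<forall>v\<in>carrier A.
        fmor F x (u \<otimes>\<^bsub>A\<^esub> v) = fmor F x u \<otimes>\<^bsub>A\<^esub> fmor F x v) \<and>
     \<comment> \<open>F~ and F^ are morphisms of S\<close>
     (\<forall>x\<in>carrier P. \<forall>y\<in>carrier P.
        fobj F (x \<otimes>\<^bsub>P\<^esub> y) = fobj F x \<otimes>\<^bsub>P\<^esub> fobj F y \<and> ftil F x y \<in> carrier A) \<and>
     fobj F \<one>\<^bsub>P\<^esub> = \<one>\<^bsub>P\<^esub> \<and> fhat F \<in> carrier A \<and>
     \<comment> \<open>naturality of F~\<close>
     (\<forall>x\<in>carrier P. \<forall>y\<in>carrier P. \<forall>u\<in>carrier A. \<forall>v\<in>carrier A.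
        ftil F x y \<otimes>\<^bsub>A\<^esub> fmor F (x \<otimes>\<^bsub>P\<^esub> y) (u \<otimes>\<^bsub>A\<^esub> act x v)
        = (fmor F x u \<otimes>\<^bsub>A\<^esub> act (fobj F x) (fmor F y v)) \<otimes>\<^bsub>A\<^esub> ftil F x y) \<and>
     \<comment> \<open>compatibility with associativity constraints:
         (F~ (x) id) o F~ o F(a) = a o (id (x) F~) o F~\<close>
     (\<forall>x\<in>carrier P. \<forall>y\<in>carrier P. \<forall>z\<in>carrier P.
        (ftil F x y \<otimes>\<^bsub>A\<^esub> act (fobj F x \<otimes>\<^bsub>P\<^esub> fobj F y) \<one>\<^bsub>A\<^esub>)
          \<otimes>\<^bsub>A\<^esub> ftil F (x \<otimes>\<^bsub>P\<^esub> y) z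
          \<otimes>\<^bsub>A\<^esub> fmor F (x \<otimes>\<^bsub>P\<^esub> (y \<otimes>\<^bsub>P\<^esub> z)) (\<xi> x y z)
        = \<xi> (fobj F x) (fobj F y) (fobj F z)
          \<otimes>\<^bsub>A\<^esub> (\<one>\<^bsub>A\<^esub> \<otimes>\<^bsub>A\<^esub> act (fobj F x) (ftil F y z))
          \<otimes>\<^bsub>A\<^esub> ftil F x (y \<otimes>\<^bsub>P\<^esub> z)) \<and>
     \<comment> \<open>compatibility with the (strict) unit constraints:
         F(l_x) = l_{Fx} o (F^ (x) id) o F~_{1,x},  F(r_x) = r_{Fx} o (id (x) F^) o F~_{x,1}\<close>
     (\<forall>x\<in>carrier P.
        fmor F x \<one>\<^bsub>A\<^esub> = (fhat F \<otimes>\<^bsub>A\<^esub> act \<one>\<^bsub>P\<^esub> \<one>\<^bsub>A\<^esub>) \<otimes>\<^bsub>A\<^esub> ftil F \<one>\<^bsub>P\<^esub> x \<and>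
        fmor F x \<one>\<^bsub>A\<^esub> = (\<one>\<^bsub>A\<^esub> \<otimes>\<^bsub>A\<^esub> act (fobj F x) (fhat F)) \<otimes>\<^bsub>A\<^esub> ftil F x \<one>\<^bsub>P\<^esub>)"

text \<open>Since Hom(x,y) is empty for
  x \<noteq> y and {x} \<times> A for x = y, and objects are isomorphic iff equal, this means:
  bijective on objects and bijective on each automorphism group.\<close>
definition monoidal_autoequivalence ::
  "('p, 'm) monoid_scheme \<Rightarrow> ('a, 'n) monoid_scheme \<Rightarrow> ('p \<Rightarrow> 'a \<Rightarrow> 'a)
   \<Rightarrow> ('p \<Rightarrow> 'p \<Rightarrow> 'p \<Rightarrow> 'a) \<Rightarrow> ('p, 'a) mfun \<Rightarrow> bool" where
  "monoidal_autoequivalence P A act \<xi> F \<longleftrightarrow>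
     monoidal_functor P A act \<xi> F \<and>
     bij_betw (fobj F) (carrier P) (carrier P) \<and>
     (\<forall>x\<in>carrier P. bij_betw (fmor F x) (carrier A) (carrier A))"

definition mf_comp ::
  "('p, 'm) monoid_scheme \<Rightarrow> ('a, 'n) monoid_scheme \<Rightarrow> ('p, 'a) mfun \<Rightarrow> ('p, 'a) mfun \<Rightarrow> ('p, 'a) mfun" where
  "mf_comp P A F G =
     \<lparr> fobj = (\<lambda>x. fobj F (fobj G x)),
       fmor = (\<lambda>x u. fmor F (fobj G x) (fmor G x u)),
       ftil = (\<lambda>x y. ftil F (fobj G x) (fobj G y) \<otimes>\<^bsub>A\<^esub> fmor F (fobj G (x \<otimes>\<^bsub>P\<^esub> y)) (ftil G x y)),
       fhat = fhat F \<otimes>\<^bsub>A\<^esub> fmor F (fobj G \<one>\<^bsub>P\<^esub>) (fhat G) \<rparr>"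

definition mf_id :: "('a, 'n) monoid_scheme \<Rightarrow> ('p, 'a) mfun" where
  "mf_id A = \<lparr> fobj = (\<lambda>x. x), fmor = (\<lambda>x u. u), ftil = (\<lambda>x y. \<one>\<^bsub>A\<^esub>), fhat = \<one>\<^bsub>A\<^esub> \<rparr>"

definition mf_eq ::
  "('p, 'm) monoid_scheme \<Rightarrow> ('a, 'n) monoid_scheme \<Rightarrow> ('p, 'a) mfun \<Rightarrow> ('p, 'a) mfun \<Rightarrow> bool" where
  "mf_eq P A F G \<longleftrightarrow>
     (\<forall>x\<in>carrier P. fobj F x = fobj G x \<and> (\<forall>u\<in>carrier A. fmor F x u = fmor G x u)) \<and>
     (\<forall>x\<in>carrier P. \<forall>y\<in>carrier P. ftil F x y = ftil G x y) \<and>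
     fhat F = fhat G"

text \<open>Isomorphism of monoidal functors th : F -> G; component th_x = (F x, th x) : F x -> G x
  (forcing F x = G x). Every morphism of S is invertible, so any such natural
  transformation is an isomorphism.\<close>
definition monoidal_nat_iso ::
  "('p, 'm) monoid_scheme \<Rightarrow> ('a, 'n) monoid_scheme \<Rightarrow> ('p \<Rightarrow> 'a \<Rightarrow> 'a)
   \<Rightarrow> ('p, 'a) mfun \<Rightarrow> ('p, 'a) mfun \<Rightarrow> ('p \<Rightarrow> 'a) \<Rightarrow> bool" where
  "monoidal_nat_iso P A act F G th \<longleftrightarrow>
     (\<forall>x\<in>carrier P. fobj F x = fobj G x \<and> th x \<in> carrier A) \<and>
     \<comment> \<open>naturality: th_x o F(x,u) = G(x,u) o th_x\<close>
     (\<forall>x\<in>carrier P. \<forall>u\<in>carrier A. th x \<otimes>\<^bsub>A\<^esub> fmor F x u = fmor G x u \<otimes>\<^bsub>A\<^esub> th x) \<and>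
     \<comment> \<open>monoidal: G~_{x,y} o th_{xy} = (th_x (x) th_y) o F~_{x,y};  F^ = G^ o th_1\<close>
     (\<forall>x\<in>carrier P. \<forall>y\<in>carrier P.
        ftil G x y \<otimes>\<^bsub>A\<^esub> th (x \<otimes>\<^bsub>P\<^esub> y)
        = (th x \<otimes>\<^bsub>A\<^esub> act (fobj F x) (th y)) \<otimes>\<^bsub>A\<^esub> ftil F x y) \<and>
     fhat F = fhat G \<otimes>\<^bsub>A\<^esub> th \<one>\<^bsub>P\<^esub>"

definition factor_set_data ::
  "('g, 'k) monoid_scheme \<Rightarrow> ('p, 'm) monoid_scheme \<Rightarrow> ('a, 'n) monoid_scheme
   \<Rightarrow> ('p \<Rightarrow> 'a \<Rightarrow> 'a) \<Rightarrow> ('p \<Rightarrow> 'p \<Rightarrow> 'p \<Rightarrow> 'a)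
   \<Rightarrow> ('g \<Rightarrow> ('p, 'a) mfun) \<Rightarrow> ('g \<Rightarrow> 'g \<Rightarrow> 'p \<Rightarrow> 'a) \<Rightarrow> bool" where
  "factor_set_data G P A act \<xi> F th \<longleftrightarrow>
     (\<forall>\<sigma>\<in>carrier G. monoidal_autoequivalence P A act \<xi> (F \<sigma>)) \<and>
     (\<forall>\<sigma>\<in>carrier G. \<forall>\<tau>\<in>carrier G.
        monoidal_nat_iso P A act (mf_comp P A (F \<sigma>) (F \<tau>)) (F (\<sigma> \<otimes>\<^bsub>G\<^esub> \<tau>)) (th \<sigma> \<tau>))"

definition factor_cond_i ::
  "('g, 'k) monoid_scheme \<Rightarrow> ('p, 'm) monoid_scheme \<Rightarrow> ('a, 'n) monoid_scheme
   \<Rightarrow> ('g \<Rightarrow> ('p, 'a) mfun) \<Rightarrow> bool" where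
  "factor_cond_i G P A F \<longleftrightarrow> mf_eq P A (F \<one>\<^bsub>G\<^esub>) (mf_id A)"

definition factor_cond_ii ::
  "('g, 'k) monoid_scheme \<Rightarrow> ('p, 'm) monoid_scheme \<Rightarrow> ('a, 'n) monoid_scheme
   \<Rightarrow> ('g \<Rightarrow> ('p, 'a) mfun) \<Rightarrow> ('g \<Rightarrow> 'g \<Rightarrow> 'p \<Rightarrow> 'a) \<Rightarrow> bool" where
  "factor_cond_ii G P A F th \<longleftrightarrow>
     (\<forall>\<sigma>\<in>carrier G. \<forall>x\<in>carrier P.
        th \<one>\<^bsub>G\<^esub> \<sigma> x = \<one>\<^bsub>A\<^esub> \<and> th \<sigma> \<one>\<^bsub>G\<^esub> x = \<one>\<^bsub>A\<^esub>)"

text \<open>Condition (iii): th^{st,g} o (th^{s,t} F^g) = th^{s,tg} o (F^s th^{t,g}).\<close>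
definition factor_cond_iii ::
  "('g, 'k) monoid_scheme \<Rightarrow> ('p, 'm) monoid_scheme \<Rightarrow> ('a, 'n) monoid_scheme
   \<Rightarrow> ('g \<Rightarrow> ('p, 'a) mfun) \<Rightarrow> ('g \<Rightarrow> 'g \<Rightarrow> 'p \<Rightarrow> 'a) \<Rightarrow> bool" where
  "factor_cond_iii G P A F th \<longleftrightarrow>
     (\<forall>\<sigma>\<in>carrier G. \<forall>\<tau>\<in>carrier G. \<forall>\<gamma>\<in>carrier G. \<forall>x\<in>carrier P.
        th (\<sigma> \<otimes>\<^bsub>G\<^esub> \<tau>) \<gamma> x \<otimes>\<^bsub>A\<^esub> th \<sigma> \<tau> (fobj (F \<gamma>) x)
        = th \<sigma> (\<tau> \<otimes>\<^bsub>G\<^esub> \<gamma>) x \<otimes>\<^bsub>A\<^esub> fmor (F \<sigma>) (fobj (F \<tau>) (fobj (F \<gamma>) x)) (th \<tau> \<gamma> x))"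

definition factor_set ::
  "('g, 'k) monoid_scheme \<Rightarrow> ('p, 'm) monoid_scheme \<Rightarrow> ('a, 'n) monoid_scheme
   \<Rightarrow> ('p \<Rightarrow> 'a \<Rightarrow> 'a) \<Rightarrow> ('p \<Rightarrow> 'p \<Rightarrow> 'p \<Rightarrow> 'a)
   \<Rightarrow> ('g \<Rightarrow> ('p, 'a) mfun) \<Rightarrow> ('g \<Rightarrow> 'g \<Rightarrow> 'p \<Rightarrow> 'a) \<Rightarrow> bool" where
  "factor_set G P A act \<xi> F th \<longleftrightarrow>
     factor_set_data G P A act \<xi> F th \<and> factor_cond_i G P A F \<and>
     factor_cond_ii G P A F th \<and> factor_cond_iii G P A F th"

end

theory Submission imports Defs begin

text \<open>Because \<open>A\<close> is commutative, the naturality square of \<open>F~\<close> reduces to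
  \<open>F(xy, u + x v) = F(x, u) + F(x) F(y, v)\<close>; with \<open>x = 1\<close> or \<open>y = 1\<close> this says that \<open>F\<close> acts
  on every \<open>Aut(x)\<close> by one and the same map, which is semilinear over the action of \<open>F\<close> on
  objects. Likewise, every natural isomorphism between functors of \<open>S\<close> is the identity on
  morphisms, so \<open>\<theta>^{\<sigma>,\<tau>}\<close> forces \<open>F^\<sigma> F^\<tau> = F^{\<sigma>\<tau>}\<close> on objects and morphisms, which yields the
  homomorphisms of (i). For (ii), \<open>F^1 F^1 = F^1\<close> and \<open>F^1\<close> is bijective, so \<open>F^1\<close> is the identity
  on objects and morphisms; since \<open>\<theta>^{1,1}\<close> is trivial, its monoidality makes the structure
  elements \<open>F~_{x,y}\<close> and \<open>F^\<close> of \<open>F^1\<close> idempotent in \<open>A\<close>, hence trivial.\<close>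

lemma bij_betw_idempotent_eq_id:
  assumes "bij_betw f S S" and "\<And>y. y \<in> S \<Longrightarrow> f (f y) = f y" and "x \<in> S"
  shows "f x = x"
  using assms by (metis bij_betw_apply bij_betw_imp_inj_on inj_on_def)

lemma hom_AutoGroupI:
  assumes "group G"
    and auto: "\<And>\<sigma>. \<sigma> \<in> carrier G \<Longrightarrow> h \<sigma> \<in> auto M"
    and mult: "\<And>\<sigma> \<tau> x. \<lbrakk>\<sigma> \<in> carrier G; \<tau> \<in> carrier G; x \<in> carrier M\<rbrakk>
                 \<Longrightarrow> h (\<sigma> \<otimes>\<^bsub>G\<^esub> \<tau>) x = h \<sigma> (h \<tau> x)"
  shows "h \<in> hom G (AutoGroup M)"
proof -
  interpret G: group G by fact
  have "h (\<sigma> \<otimes>\<^bsub>G\<^esub> \<tau>) = h \<sigma> \<otimes>\<^bsub>AutoGroup M\<^esub> h \<tau>"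
    if \<sigma>: "\<sigma> \<in> carrier G" and \<tau>: "\<tau> \<in> carrier G" for \<sigma> \<tau>
  proof -
    have bij: "h \<sigma> \<in> Bij (carrier M)" "h \<tau> \<in> Bij (carrier M)" "h (\<sigma> \<otimes>\<^bsub>G\<^esub> \<tau>) \<in> Bij (carrier M)"
      using auto \<sigma> \<tau> by (auto simp: auto_def)
    have "h \<sigma> \<otimes>\<^bsub>AutoGroup M\<^esub> h \<tau> = compose (carrier M) (h \<sigma>) (h \<tau>)"
      using bij by (simp add: AutoGroup_def BijGroup_def)
    also have "\<dots> = h (\<sigma> \<otimes>\<^bsub>G\<^esub> \<tau>)"
      by (rule extensionalityI[of _ "carrier M"])
        (use bij mult \<sigma> \<tau> in \<open>auto simp: compose_def Bij_def\<close>)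
    finally show ?thesis by simp
  qed
  then show ?thesis
    using auto by (auto simp: hom_def AutoGroup_def)
qed

lemma monoidal_nat_iso_fmor_eq:
  assumes "comm_group A"
    and "monoidal_nat_iso P A act F G th" and "x \<in> carrier P" and "u \<in> carrier A"
    and "fmor F x u \<in> carrier A" and "fmor G x u \<in> carrier A"
  shows "fmor F x u = fmor G x u"
proof -
  interpret A: comm_group A by fact
  have th: "th x \<in> carrier A"
    and "th x \<otimes>\<^bsub>A\<^esub> fmor F x u = fmor G x u \<otimes>\<^bsub>A\<^esub> th x"
    using assms by (auto simp: monoidal_nat_iso_def)
  then have "th x \<otimes>\<^bsub>A\<^esub> fmor F x u = th x \<otimes>\<^bsub>A\<^esub> fmor G x u"
    using assms(6) A.m_comm by simp
  then show ?thesis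
    using th assms(5,6) by simp
qed

lemma monoidal_nat_iso_comp_fobj:
  assumes "monoidal_nat_iso P A act (mf_comp P A F G) H th" and "x \<in> carrier P"
  shows "fobj F (fobj G x) = fobj H x"
  using assms by (simp add: monoidal_nat_iso_def mf_comp_def)

lemma monoidal_nat_iso_comp_fmor:
  assumes "comm_group A"
    and iso: "monoidal_nat_iso P A act (mf_comp P A F G) H th"
    and F: "monoidal_functor P A act \<xi> F" and G: "monoidal_functor P A act \<xi> G"
    and H: "monoidal_functor P A act \<xi> H"
    and x: "x \<in> carrier P" and u: "u \<in> carrier A"
  shows "fmor F (fobj G x) (fmor G x u) = fmor H x u"
proof -
  have "fmor F (fobj G x) (fmor G x u) \<in> carrier A" "fmor H x u \<in> carrier A"
    using F G H x u by (simp_all add: monoidal_functor_def)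
  then show ?thesis
    using monoidal_nat_iso_fmor_eq[OF \<open>comm_group A\<close> iso x u] by (simp add: mf_comp_def)
qed

lemma monoidal_autoequivalence_fobj_in_auto:
  assumes "monoid P" and "monoidal_autoequivalence P A act \<xi> F"
  shows "restrict (fobj F) (carrier P) \<in> auto P"
proof -
  have "restrict (fobj F) (carrier P) \<in> hom P P"
    using assms
    by (simp add: monoidal_autoequivalence_def monoidal_functor_def hom_def
        monoid.m_closed monoid.one_closed)
  moreover have "bij_betw (restrict (fobj F) (carrier P)) (carrier P) (carrier P)"
    using assms by (simp add: monoidal_autoequivalence_def)
  ultimately show ?thesis
    by (simp add: auto_def Bij_def)
qed

lemma monoidal_autoequivalence_fmor_in_auto:
  assumes "monoid P" and "monoid A" and "monoidal_autoequivalence P A act \<xi> F"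
  shows "restrict (fmor F \<one>\<^bsub>P\<^esub>) (carrier A) \<in> auto A"
proof -
  have "restrict (fmor F \<one>\<^bsub>P\<^esub>) (carrier A) \<in> hom A A"
    using assms
    by (simp add: monoidal_autoequivalence_def monoidal_functor_def hom_def
        monoid.m_closed monoid.one_closed)
  moreover have "bij_betw (restrict (fmor F \<one>\<^bsub>P\<^esub>) (carrier A)) (carrier A) (carrier A)"
    using assms by (simp add: monoidal_autoequivalence_def)
  ultimately show ?thesis
    by (simp add: auto_def Bij_def)
qed

context
  fixes P :: "('p, 'm) monoid_scheme" and A :: "('a, 'n) monoid_scheme"
    and act :: "'p \<Rightarrow> 'a \<Rightarrow> 'a"
  assumes pi_module: "pi_module P A act"
begin

interpretation P: group P
  using pi_module by (simp add: pi_module_def)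

interpretation A: comm_group A
  using pi_module by (simp add: pi_module_def)

lemma act_closed: "x \<in> carrier P \<Longrightarrow> u \<in> carrier A \<Longrightarrow> act x u \<in> carrier A"
  using pi_module by (auto simp: pi_module_def hom_def)

lemma act_one: "x \<in> carrier P \<Longrightarrow> act x \<one>\<^bsub>A\<^esub> = \<one>\<^bsub>A\<^esub>"
  using pi_module hom_one A.is_group by (auto simp: pi_module_def)

lemma monoidal_functor_fmor_tensor:
  assumes F: "monoidal_functor P A act \<xi> F"
    and x: "x \<in> carrier P" and y: "y \<in> carrier P" and u: "u \<in> carrier A" and v: "v \<in> carrier A"
  shows "fmor F (x \<otimes>\<^bsub>P\<^esub> y) (u \<otimes>\<^bsub>A\<^esub> act x v) = fmor F x u \<otimes>\<^bsub>A\<^esub> act (fobj F x) (fmor F y v)"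
proof -
  have til: "ftil F x y \<in> carrier A"
    and lhs: "fmor F (x \<otimes>\<^bsub>P\<^esub> y) (u \<otimes>\<^bsub>A\<^esub> act x v) \<in> carrier A"
    and rhs: "fmor F x u \<otimes>\<^bsub>A\<^esub> act (fobj F x) (fmor F y v) \<in> carrier A"
    using F x y u v act_closed by (auto simp: monoidal_functor_def)
  have "ftil F x y \<otimes>\<^bsub>A\<^esub> fmor F (x \<otimes>\<^bsub>P\<^esub> y) (u \<otimes>\<^bsub>A\<^esub> act x v)
      = (fmor F x u \<otimes>\<^bsub>A\<^esub> act (fobj F x) (fmor F y v)) \<otimes>\<^bsub>A\<^esub> ftil F x y"
    using F x y u v by (simp add: monoidal_functor_def)
  also have "\<dots> = ftil F x y \<otimes>\<^bsub>A\<^esub> (fmor F x u \<otimes>\<^bsub>A\<^esub> act (fobj F x) (fmor F y v))"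
    using rhs til by (rule A.m_comm)
  finally show ?thesis
    using til lhs rhs by simp
qed

lemma monoidal_functor_fmor_eq_fmor_one:
  assumes F: "monoidal_functor P A act \<xi> F" and x: "x \<in> carrier P" and u: "u \<in> carrier A"
  shows "fmor F x u = fmor F \<one>\<^bsub>P\<^esub> u"
  using monoidal_functor_fmor_tensor[OF F P.one_closed x u A.one_closed] F x u act_one
  by (simp add: monoidal_functor_def)

lemma monoidal_functor_fmor_act:
  assumes F: "monoidal_functor P A act \<xi> F" and x: "x \<in> carrier P" and u: "u \<in> carrier A"
  shows "fmor F \<one>\<^bsub>P\<^esub> (act x u) = act (fobj F x) (fmor F \<one>\<^bsub>P\<^esub> u)"
proof -
  have "fmor F x (act x u) = act (fobj F x) (fmor F \<one>\<^bsub>P\<^esub> u)"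
    using monoidal_functor_fmor_tensor[OF F x P.one_closed A.one_closed u] F x u act_one act_closed
    by (simp add: monoidal_functor_def)
  then show ?thesis
    using monoidal_functor_fmor_eq_fmor_one[OF F x act_closed[OF x u]] by simp
qed

lemma factor_set_data_equivariant_action:
  assumes "group G" and fs: "factor_set_data G P A act \<xi> F th"
  shows "\<exists>\<phi> f. \<phi> \<in> hom G (AutoGroup P) \<and> f \<in> hom G (AutoGroup A) \<and>
           (\<forall>\<sigma>\<in>carrier G. \<forall>x\<in>carrier P.
              fobj (F \<sigma>) x = \<phi> \<sigma> x \<and> (\<forall>a\<in>carrier A. fmor (F \<sigma>) x a = f \<sigma> a)) \<and>
           (\<forall>\<sigma>\<in>carrier G. \<forall>x\<in>carrier P. \<forall>a\<in>carrier A.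
              f \<sigma> (act x a) = act (\<phi> \<sigma> x) (f \<sigma> a))"
proof -
  interpret G: group G by fact
  have ae: "\<And>\<sigma>. \<sigma> \<in> carrier G \<Longrightarrow> monoidal_autoequivalence P A act \<xi> (F \<sigma>)"
    and iso: "\<And>\<sigma> \<tau>. \<lbrakk>\<sigma> \<in> carrier G; \<tau> \<in> carrier G\<rbrakk>
                \<Longrightarrow> monoidal_nat_iso P A act (mf_comp P A (F \<sigma>) (F \<tau>)) (F (\<sigma> \<otimes>\<^bsub>G\<^esub> \<tau>)) (th \<sigma> \<tau>)"
    using fs unfolding factor_set_data_def by blast+
  then have mf: "\<And>\<sigma>. \<sigma> \<in> carrier G \<Longrightarrow> monoidal_functor P A act \<xi> (F \<sigma>)"
    unfolding monoidal_autoequivalence_def by blast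
  have fobj_closed: "fobj (F \<sigma>) x \<in> carrier P" if "\<sigma> \<in> carrier G" "x \<in> carrier P" for \<sigma> x
    using mf[OF that(1)] that(2) by (simp add: monoidal_functor_def)
  have fobj_one: "fobj (F \<sigma>) \<one>\<^bsub>P\<^esub> = \<one>\<^bsub>P\<^esub>" if "\<sigma> \<in> carrier G" for \<sigma>
    using mf[OF that] by (simp add: monoidal_functor_def)
  have fmor_closed: "fmor (F \<sigma>) \<one>\<^bsub>P\<^esub> u \<in> carrier A" if "\<sigma> \<in> carrier G" "u \<in> carrier A" for \<sigma> u
    using mf[OF that(1)] that(2) by (simp add: monoidal_functor_def)
  define \<phi> where "\<phi> \<sigma> = restrict (fobj (F \<sigma>)) (carrier P)" for \<sigma>
  define f where "f \<sigma> = restrict (fmor (F \<sigma>) \<one>\<^bsub>P\<^esub>) (carrier A)" for \<sigma>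
  have \<phi>_hom: "\<phi> \<in> hom G (AutoGroup P)"
  proof (rule hom_AutoGroupI[OF \<open>group G\<close>])
    show "\<phi> \<sigma> \<in> auto P" if "\<sigma> \<in> carrier G" for \<sigma>
      using monoidal_autoequivalence_fobj_in_auto[OF P.monoid_axioms ae[OF that]] by (simp add: \<phi>_def)
    show "\<phi> (\<sigma> \<otimes>\<^bsub>G\<^esub> \<tau>) x = \<phi> \<sigma> (\<phi> \<tau> x)"
      if "\<sigma> \<in> carrier G" "\<tau> \<in> carrier G" "x \<in> carrier P" for \<sigma> \<tau> x
      using monoidal_nat_iso_comp_fobj[OF iso[OF that(1,2)] that(3)] fobj_closed that
      by (simp add: \<phi>_def)
  qed
  have f_hom: "f \<in> hom G (AutoGroup A)"
  proof (rule hom_AutoGroupI[OF \<open>group G\<close>])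
    show "f \<sigma> \<in> auto A" if "\<sigma> \<in> carrier G" for \<sigma>
      using monoidal_autoequivalence_fmor_in_auto[OF P.monoid_axioms A.monoid_axioms ae[OF that]]
      by (simp add: f_def)
    show "f (\<sigma> \<otimes>\<^bsub>G\<^esub> \<tau>) u = f \<sigma> (f \<tau> u)"
      if "\<sigma> \<in> carrier G" "\<tau> \<in> carrier G" "u \<in> carrier A" for \<sigma> \<tau> u
      using monoidal_nat_iso_comp_fmor[OF A.comm_group_axioms iso[OF that(1,2)]
          mf[OF that(1)] mf[OF that(2)] mf[OF G.m_closed[OF that(1,2)]] P.one_closed that(3)] fobj_one fmor_closed that
      by (simp add: f_def)
  qed
  have fmor_eq: "fmor (F \<sigma>) x a = f \<sigma> a"
    if "\<sigma> \<in> carrier G" "x \<in> carrier P" "a \<in> carrier A" for \<sigma> x a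
    using monoidal_functor_fmor_eq_fmor_one[OF mf that(2,3)] that by (simp add: f_def)
  have f_act: "f \<sigma> (act x a) = act (\<phi> \<sigma> x) (f \<sigma> a)"
    if "\<sigma> \<in> carrier G" "x \<in> carrier P" "a \<in> carrier A" for \<sigma> x a
    using monoidal_functor_fmor_act[OF mf that(2,3)] act_closed that by (simp add: f_def \<phi>_def)
  show ?thesis
    by (intro exI[of _ \<phi>] exI[of _ f] conjI ballI)
      (simp_all add: \<phi>_hom f_hom fmor_eq f_act \<phi>_def)
qed

lemma idempotent_monoidal_autoequivalence_eq_id:
  assumes ae: "monoidal_autoequivalence P A act \<xi> F"
    and iso: "monoidal_nat_iso P A act (mf_comp P A F F) F th"
    and th_one: "\<And>x. x \<in> carrier P \<Longrightarrow> th x = \<one>\<^bsub>A\<^esub>"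
  shows "mf_eq P A F (mf_id A)"
proof -
  have F: "monoidal_functor P A act \<xi> F"
    and fobj_bij: "bij_betw (fobj F) (carrier P) (carrier P)"
    and fmor_bij: "\<And>x. x \<in> carrier P \<Longrightarrow> bij_betw (fmor F x) (carrier A) (carrier A)"
    using ae by (simp_all add: monoidal_autoequivalence_def)
  have fobj_id: "fobj F x = x" if "x \<in> carrier P" for x
    using fobj_bij monoidal_nat_iso_comp_fobj[OF iso] that by (rule bij_betw_idempotent_eq_id)
  have fmor_id: "fmor F x u = u" if x: "x \<in> carrier P" and "u \<in> carrier A" for x u
  proof (rule bij_betw_idempotent_eq_id[OF fmor_bij[OF x] _ that(2)])
    show "fmor F x (fmor F x v) = fmor F x v" if "v \<in> carrier A" for v
      using monoidal_nat_iso_comp_fmor[OF A.comm_group_axioms iso F F F x that] fobj_id[OF x] by simp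
  qed
  have ftil_one: "ftil F x y = \<one>\<^bsub>A\<^esub>" if x: "x \<in> carrier P" and y: "y \<in> carrier P" for x y
  proof -
    have til: "ftil F x y \<in> carrier A" and xy: "x \<otimes>\<^bsub>P\<^esub> y \<in> carrier P"
      using F x y by (simp_all add: monoidal_functor_def)
    have "ftil F x y \<otimes>\<^bsub>A\<^esub> th (x \<otimes>\<^bsub>P\<^esub> y)
        = (th x \<otimes>\<^bsub>A\<^esub> act (fobj (mf_comp P A F F) x) (th y)) \<otimes>\<^bsub>A\<^esub> ftil (mf_comp P A F F) x y"
      using iso x y unfolding monoidal_nat_iso_def by blast
    then have "ftil F x y = ftil F x y \<otimes>\<^bsub>A\<^esub> ftil F x y"
      using th_one x y xy til fobj_id fmor_id act_one by (simp add: mf_comp_def)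
    then show ?thesis
      using til by simp
  qed
  have fhat_one: "fhat F = \<one>\<^bsub>A\<^esub>"
  proof -
    have hat: "fhat F \<in> carrier A" and "fobj F \<one>\<^bsub>P\<^esub> = \<one>\<^bsub>P\<^esub>"
      using F by (simp_all add: monoidal_functor_def)
    moreover have "fhat (mf_comp P A F F) = fhat F \<otimes>\<^bsub>A\<^esub> th \<one>\<^bsub>P\<^esub>"
      using iso unfolding monoidal_nat_iso_def by blast
    ultimately have "fhat F \<otimes>\<^bsub>A\<^esub> fhat F = fhat F"
      using th_one fmor_id by (simp add: mf_comp_def)
    then show ?thesis
      using hat by simp
  qed
  show ?thesis
    using fobj_id fmor_id ftil_one fhat_one by (simp add: mf_eq_def mf_id_def)
qed

lemma factor_cond_i_if_factor_cond_ii: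
  assumes "group G" and fs: "factor_set_data G P A act \<xi> F th"
    and cond_ii: "factor_cond_ii G P A F th"
  shows "factor_cond_i G P A F"
proof -
  interpret G: group G by fact
  have "monoidal_autoequivalence P A act \<xi> (F \<one>\<^bsub>G\<^esub>)"
    and "monoidal_nat_iso P A act (mf_comp P A (F \<one>\<^bsub>G\<^esub>) (F \<one>\<^bsub>G\<^esub>)) (F (\<one>\<^bsub>G\<^esub> \<otimes>\<^bsub>G\<^esub> \<one>\<^bsub>G\<^esub>))
           (th \<one>\<^bsub>G\<^esub> \<one>\<^bsub>G\<^esub>)"
    using fs unfolding factor_set_data_def by blast+
  moreover have "\<And>x. x \<in> carrier P \<Longrightarrow> th \<one>\<^bsub>G\<^esub> \<one>\<^bsub>G\<^esub> x = \<one>\<^bsub>A\<^esub>"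
    using cond_ii by (simp add: factor_cond_ii_def)
  ultimately show ?thesis
    unfolding factor_cond_i_def
    by (simp add: idempotent_monoidal_autoequivalence_eq_id)
qed

end

theorem theorem2p3:
  fixes G :: "('g, 'k) monoid_scheme" and P :: "('p, 'm) monoid_scheme"
    and A :: "('a, 'n) monoid_scheme"
    and act :: "'p \<Rightarrow> 'a \<Rightarrow> 'a" and \<xi> :: "'p \<Rightarrow> 'p \<Rightarrow> 'p \<Rightarrow> 'a"
    and F :: "'g \<Rightarrow> ('p, 'a) mfun" and th :: "'g \<Rightarrow> 'g \<Rightarrow> 'p \<Rightarrow> 'a"
  assumes "group G" and "Gr_category_type P A act \<xi>"
  shows "(factor_set G P A act \<xi> F th \<longrightarrow>
           (\<exists>\<phi> f. \<phi> \<in> hom G (AutoGroup P) \<and> f \<in> hom G (AutoGroup A) \<and>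
              (\<forall>\<sigma>\<in>carrier G. \<forall>x\<in>carrier P.
                 fobj (F \<sigma>) x = \<phi> \<sigma> x \<and> (\<forall>a\<in>carrier A. fmor (F \<sigma>) x a = f \<sigma> a)) \<and>
              (\<forall>\<sigma>\<in>carrier G. \<forall>x\<in>carrier P. \<forall>a\<in>carrier A.
                 f \<sigma> (act x a) = act (\<phi> \<sigma> x) (f \<sigma> a))))
       \<and> (factor_set_data G P A act \<xi> F th \<and> factor_cond_ii G P A F th \<and>
           factor_cond_iii G P A F th \<longrightarrow> factor_cond_i G P A F)"
proof -
  have pi_module: "pi_module P A act"
    using assms(2) by (simp add: Gr_category_type_def)
  show ?thesis
    unfolding factor_set_def
    using factor_set_data_equivariant_action[OF pi_module assms(1)]
      factor_cond_i_if_factor_cond_ii[OF pi_module assms(1)]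
    by blast
qed

end
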